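(* Let $K\ge1$, $N_1,\ldots,N_K\ge1$ integers, $T\ge1$, and let $\ell_t:\Delta_{N_1}\times\cdots\times\Delta_{N_K}\to\mathbb R$, $t\ge1$, be differentiable and jointly convex. Assume that for all $k$, $\max_{1\le t\le T}\sup_{\boldsymbol u}\max_{1\le i\le N_k}|\partial_{u^{(k)}_i}\ell_t(\boldsymbol u)|\le G^{(k)}$ with $G^{(k)}>0$. Then the Adaptive Multi-variable Exponentiated Gradient algorithm (described in the context) satisfies $$\sum_{t=1}^T\ell_t\big(\hat{\boldsymbol u}^{(1)}_t,\ldots,\hat{\boldsymbol u}^{(K)}_t\big)-\min_{(\boldsymbol u^{(1)},\ldots,\boldsymbol u^{(K)})}\sum_{t=1}^T\ell_t\big(\boldsymbol u^{(1)},\ldots,\boldsymbol u^{(K)}\big)\le2\sum_{k=1}^KG^{(k)}\sqrt{T^{(k)}\log N_k},$$ where $T^{(k)}=\sum_{t=1}^T\mathbb 1\{\sup_{\boldsymbol u}\max_i|\partial_{u^{(k)}_i}\ell_t(\boldsymbol u)|>0\}$ and the minimum is over $\Delta_{N_1}\times\cdots\times\Delta_{N_K}$.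
   Context: $\Delta_N=\{\boldsymbol u\in\mathbb R_+^N:\sum_iu_i=1\}$. Adaptive Multi-variable Exponentiated Gradient algorithm (with the constants $G^{(k)}$ as input): initialize $\hat{\boldsymbol u}^{(k)}_1=(1/N_k,\ldots,1/N_k)$. At each round $t$, output $(\hat{\boldsymbol u}^{(1)}_t,\ldots,\hat{\boldsymbol u}^{(K)}_t)$ and observe $\ell_t$; set $$\eta^{(k)}_{t+1}=\frac1{G^{(k)}}\sqrt{\frac{\log N_k}{1+\sum_{s=1}^t\mathbb 1\{\sup_{\boldsymbol u}\max_i|\partial_{u^{(k)}_i}\ell_s(\boldsymbol u)|>0\}}},$$ and $\hat u^{(k)}_{t+1,i}=\exp\big(-\eta^{(k)}_{t+1}\sum_{s=1}^t\partial_{u^{(k)}_i}\ell_s(\hat{\boldsymbol u}^{(1)}_s,\ldots,\hat{\boldsymbol u}^{(K)}_s)\big)/Z^{(k)}_{t+1}$, where $Z^{(k)}_{t+1}$ normalizes over $i\in\{1,\ldots,N_k\}$. *)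

theory Defs
  imports "HOL-Analysis.Analysis"
begin

text \<open>Coordinates of the ambient space are indexed by a finite type 'n; the map
  blk assigns each coordinate to its block k (block k has N_k = card of its fibre
  coordinates). A point of the product of simplices is a vector u :: real^'n.\<close>

definition blocksize :: "('n::finite \<Rightarrow> nat) \<Rightarrow> nat \<Rightarrow> nat" where
  "blocksize blk k = card {i. blk i = k}"

definition prod_simplex :: "nat \<Rightarrow> ('n::finite \<Rightarrow> nat) \<Rightarrow> (real^'n) set" where
  "prod_simplex K blk = {u. (\<forall>i. 0 \<le> u $ i) \<and> (\<forall>k<K. (\<Sum>i\<in>{i. blk i = k}. u $ i) = 1)}"

definition partial :: "(real^'n::finite \<Rightarrow> real) \<Rightarrow> real^'n \<Rightarrow> 'n \<Rightarrow> real" where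
  "partial f u i = frechet_derivative f (at u) (axis i 1)"

definition grad :: "(real^'n::finite \<Rightarrow> real) \<Rightarrow> real^'n \<Rightarrow> real^'n" where
  "grad f u = (\<chi> i. partial f u i)"

definition active :: "nat \<Rightarrow> ('n::finite \<Rightarrow> nat) \<Rightarrow> (nat \<Rightarrow> real^'n \<Rightarrow> real) \<Rightarrow> nat \<Rightarrow> nat \<Rightarrow> bool" where
  "active K blk L k s = (\<exists>u\<in>prod_simplex K blk. \<exists>i. blk i = k \<and> \<bar>partial (L s) u i\<bar> > 0)"

text \<open>Learning rate eta^{(k)}_{t+1} (uses rounds 1..t).\<close>
definition eta :: "nat \<Rightarrow> ('n::finite \<Rightarrow> nat) \<Rightarrow> (nat \<Rightarrow> real^'n \<Rightarrow> real) \<Rightarrow> (nat \<Rightarrow> real) \<Rightarrow> nat \<Rightarrow> nat \<Rightarrow> real" where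
  "eta K blk L G k t = (1 / G k) * sqrt (ln (real (blocksize blk k)) /
      (1 + real (card {s\<in>{1..t}. active K blk L k s})))"

text \<open>Exponential weights from cumulative gradient c, with learning rates eta_{t+1}:
  this is the play hat u_{t+1}.\<close>
definition weights :: "nat \<Rightarrow> ('n::finite \<Rightarrow> nat) \<Rightarrow> (nat \<Rightarrow> real^'n \<Rightarrow> real) \<Rightarrow> (nat \<Rightarrow> real) \<Rightarrow> nat \<Rightarrow> real^'n \<Rightarrow> real^'n" where
  "weights K blk L G t c = (\<chi> i. exp (- eta K blk L G (blk i) t * c $ i) /
      (\<Sum>j\<in>{j. blk j = blk i}. exp (- eta K blk L G (blk i) t * c $ j)))"

primrec cumgrad :: "nat \<Rightarrow> ('n::finite \<Rightarrow> nat) \<Rightarrow> (nat \<Rightarrow> real^'n \<Rightarrow> real) \<Rightarrow> (nat \<Rightarrow> real) \<Rightarrow> nat \<Rightarrow> real^'n" where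
  "cumgrad K blk L G 0 = 0"
| "cumgrad K blk L G (Suc t) = cumgrad K blk L G t
     + grad (L (Suc t)) (weights K blk L G t (cumgrad K blk L G t))"

definition ameg :: "nat \<Rightarrow> ('n::finite \<Rightarrow> nat) \<Rightarrow> (nat \<Rightarrow> real^'n \<Rightarrow> real) \<Rightarrow> (nat \<Rightarrow> real) \<Rightarrow> nat \<Rightarrow> real^'n" where
  "ameg K blk L G t = weights K blk L G (t - 1) (cumgrad K blk L G (t - 1))"

end

theory Submission
  imports Defs "HOL-Probability.Hoeffding"
begin

text \<open>Linearising each convex loss at the played point bounds the regret by a sum over the
  blocks of linear regrets, and on each block the algorithm is the exponentially weighted
  forecaster fed with the partial derivatives. For this forecaster the potential
  \<open>-(1/\<eta>) ln ((1/N) \<Sum>\<^sub>i exp (-\<eta> C\<^sub>i))\<close> of the cumulative losses C grows in each round by at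
  least the forecaster's loss minus \<open>\<eta> G\<^sup>2 / 2\<close> (Hoeffding's lemma), does not grow when \<open>\<eta>\<close>
  decreases (Jensen), and ends below the comparator's loss plus \<open>ln N / \<eta>\<close>. Choosing \<open>\<eta>\<close>
  proportional to \<open>1 / sqrt (1 + number of active rounds so far)\<close> makes both error terms of
  order \<open>G sqrt (T\<^sub>k ln N)\<close>; inactive rounds have zero gradients and cost nothing.\<close>

lemma exp_le_chord:
  fixes x G \<eta> :: real
  assumes "\<bar>x\<bar> \<le> G" and "G > 0"
  shows "exp (- \<eta> * x) \<le> ((G - x) * exp (\<eta> * G) + (G + x) * exp (- \<eta> * G)) / (2 * G)"
proof -
  define \<theta> where "\<theta> = (G + x) / (2 * G)"
  have "0 \<le> \<theta>" "\<theta> \<le> 1" using assms by (auto simp: \<theta>_def field_simps)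
  moreover have "(1 - \<theta>) *\<^sub>R (\<eta> * G) + \<theta> *\<^sub>R (- \<eta> * G) = - \<eta> * x"
    using assms(2) by (simp add: \<theta>_def field_simps)
  ultimately have "exp (- \<eta> * x) \<le> (1 - \<theta>) * exp (\<eta> * G) + \<theta> * exp (- \<eta> * G)"
    using convex_onD[OF exp_convex, of \<theta> "\<eta> * G" "- \<eta> * G"] by simp
  also have "\<dots> = ((G - x) * exp (\<eta> * G) + (G + x) * exp (- \<eta> * G)) / (2 * G)"
    using assms(2) by (simp add: \<theta>_def field_simps)
  finally show ?thesis .
qed

lemma sum_pos_weighted_exp:
  fixes p f :: "'a \<Rightarrow> real"
  assumes "finite B" and "\<And>i. i \<in> B \<Longrightarrow> 0 \<le> p i" and "sum p B = 1"
  shows "0 < (\<Sum>i\<in>B. p i * exp (f i))"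
proof -
  obtain j where "j \<in> B" "0 < p j"
    using assms(3) sum_nonpos[of B p] by (metis not_le zero_less_one)
  then show ?thesis
    using assms(1,2) by (intro sum_pos2[of B j]) auto
qed

lemma sum_weighted_exp_le_chord:
  fixes p g :: "'a \<Rightarrow> real"
  assumes p0: "\<And>i. i \<in> B \<Longrightarrow> 0 \<le> p i" and p1: "sum p B = 1"
    and gb: "\<And>i. i \<in> B \<Longrightarrow> \<bar>g i\<bar> \<le> G" and G: "0 < G"
  defines "m \<equiv> \<Sum>i\<in>B. p i * g i"
  shows "(\<Sum>i\<in>B. p i * exp (- \<eta> * g i))
    \<le> ((G - m) * exp (\<eta> * G) + (G + m) * exp (- \<eta> * G)) / (2 * G)"
proof -
  have "(\<Sum>i\<in>B. p i * exp (- \<eta> * g i))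
      \<le> (\<Sum>i\<in>B. p i * (((G - g i) * exp (\<eta> * G) + (G + g i) * exp (- \<eta> * G)) / (2 * G)))"
    using p0 gb G by (intro sum_mono mult_left_mono exp_le_chord) auto
  also have "\<dots> = (\<Sum>i\<in>B. ((exp (\<eta> * G) + exp (- \<eta> * G)) * G * p i
        + (exp (- \<eta> * G) - exp (\<eta> * G)) * (p i * g i)) / (2 * G))"
    by (intro sum.cong) (simp_all add: algebra_simps)
  also have "\<dots> = ((exp (\<eta> * G) + exp (- \<eta> * G)) * G * sum p B
        + (exp (- \<eta> * G) - exp (\<eta> * G)) * m) / (2 * G)"
    by (simp add: m_def sum.distrib flip: sum_divide_distrib sum_distrib_left)
  also have "\<dots> = ((G - m) * exp (\<eta> * G) + (G + m) * exp (- \<eta> * G)) / (2 * G)"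
    using p1 by (simp add: algebra_simps)
  finally show ?thesis .
qed

lemma ln_sum_exp_le_hoeffding:
  fixes p g :: "'a \<Rightarrow> real"
  assumes fin: "finite B" and p0: "\<And>i. i \<in> B \<Longrightarrow> 0 \<le> p i" and p1: "sum p B = 1"
    and gb: "\<And>i. i \<in> B \<Longrightarrow> \<bar>g i\<bar> \<le> G" and \<eta>: "0 \<le> \<eta>"
  shows "ln (\<Sum>i\<in>B. p i * exp (- \<eta> * g i)) \<le> - \<eta> * (\<Sum>i\<in>B. p i * g i) + \<eta>\<^sup>2 * G\<^sup>2 / 2"
proof (cases "G = 0")
  case True
  then show ?thesis using gb p1 by simp
next
  case False
  obtain j where "j \<in> B" using p1 by fastforce
  with gb have "0 \<le> G" by (meson abs_ge_zero order.trans)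
  with False have G: "G > 0" by simp
  define m where "m = (\<Sum>i\<in>B. p i * g i)"
  have "\<bar>m\<bar> \<le> (\<Sum>i\<in>B. p i * G)"
    unfolding m_def using p0 gb
    by (intro order.trans[OF sum_abs] sum_mono) (auto simp: abs_mult intro: mult_left_mono)
  then have "0 \<le> G - m" using p1 by (simp flip: sum_distrib_right)
  define q where "q = (G - m) / (2 * G)"
  have q: "0 \<le> q" using \<open>0 \<le> G - m\<close> G by (simp add: q_def)
  have pos: "0 < 1 + q * (exp (2 * \<eta> * G) - 1)"
    using q \<eta> G by (intro add_pos_nonneg mult_nonneg_nonneg) auto
  have "(\<Sum>i\<in>B. p i * exp (- \<eta> * g i))
      \<le> ((G - m) * exp (\<eta> * G) + (G + m) * exp (- \<eta> * G)) / (2 * G)"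
    unfolding m_def by (rule sum_weighted_exp_le_chord[OF p0 p1 gb G])
  also have "\<dots> = exp (- \<eta> * G) * (1 + q * (exp (2 * \<eta> * G) - 1))"
    using G by (simp add: q_def field_simps flip: exp_add)
  finally have "ln (\<Sum>i\<in>B. p i * exp (- \<eta> * g i)) \<le> - \<eta> * G + ln (1 + q * (exp (2 * \<eta> * G) - 1))"
    using pos sum_pos_weighted_exp[OF fin p0 p1] by (simp add: ln_mult flip: ln_le_cancel_iff)
  also have "\<dots> \<le> - \<eta> * G + 2 * \<eta> * G * q + (2 * \<eta> * G)\<^sup>2 / 8"
    using Hoeffdings_lemma_aux[of "2 * \<eta> * G" q] \<eta> G q by simp
  also have "\<dots> = - \<eta> * m + \<eta>\<^sup>2 * G\<^sup>2 / 2"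
    using G by (simp add: q_def field_simps power2_eq_square)
  finally show ?thesis by (simp add: m_def)
qed

definition exp_weights :: "'a set \<Rightarrow> real \<Rightarrow> ('a \<Rightarrow> real) \<Rightarrow> 'a \<Rightarrow> real" where
  "exp_weights B \<eta> C i = exp (- \<eta> * C i) / (\<Sum>j\<in>B. exp (- \<eta> * C j))"

definition exp_potential :: "'a set \<Rightarrow> real \<Rightarrow> ('a \<Rightarrow> real) \<Rightarrow> real" where
  "exp_potential B \<eta> C = - ln ((\<Sum>i\<in>B. exp (- \<eta> * C i)) / card B) / \<eta>"

lemma sum_exp_pos: "finite B \<Longrightarrow> B \<noteq> {} \<Longrightarrow> 0 < (\<Sum>i\<in>B. exp (f i :: real))"
  by (intro sum_pos) auto

lemma exp_weights_nonneg: "0 \<le> exp_weights B \<eta> C i"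
  by (simp add: exp_weights_def sum_nonneg)

lemma sum_exp_weights:
  assumes "finite B" and "B \<noteq> {}"
  shows "(\<Sum>i\<in>B. exp_weights B \<eta> C i) = 1"
  using sum_exp_pos[OF assms, of "\<lambda>i. - \<eta> * C i"]
  by (simp add: exp_weights_def flip: sum_divide_distrib)

lemma exp_weights_singleton [simp]: "exp_weights {b} \<eta> C b = 1"
  by (simp add: exp_weights_def)

lemma exp_potential_zero [simp]:
  "finite B \<Longrightarrow> B \<noteq> {} \<Longrightarrow> exp_potential B \<eta> (\<lambda>_. 0) = 0"
  by (simp add: exp_potential_def)

text \<open>Jensen's inequality for the convex map \<open>y \<mapsto> y powr (\<eta>'/\<eta>)\<close>.\<close>
lemma exp_potential_antimono:
  assumes fin: "finite B" and ne: "B \<noteq> {}" and "0 < \<eta>" and "\<eta> \<le> \<eta>'"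
  shows "exp_potential B \<eta>' C \<le> exp_potential B \<eta> C"
proof -
  define N where "N = real (card B)"
  have N: "N > 0" using fin ne by (simp add: N_def card_gt_0_iff)
  define y where "y i = exp (- \<eta> * C i)" for i
  define r where "r = \<eta>' / \<eta>"
  have r: "r \<ge> 1" using assms by (simp add: r_def)
  have y_powr: "y i powr r = exp (- \<eta>' * C i)" for i
    using assms by (simp add: y_def powr_def r_def field_simps)
  have "((\<Sum>i\<in>B. y i) / N) powr r = (\<Sum>i\<in>B. (1 / N) *\<^sub>R y i) powr r"
    by (simp add: sum_divide_distrib)
  also have "\<dots> \<le> (\<Sum>i\<in>B. (1 / N) * y i powr r)"
    using N by (intro convex_on_sum[OF fin ne powr_convex[OF r]]) (auto simp: N_def y_def)
  also have "\<dots> = (\<Sum>i\<in>B. exp (- \<eta>' * C i)) / N"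
    by (simp add: y_powr sum_divide_distrib)
  finally have "ln (((\<Sum>i\<in>B. y i) / N) powr r) \<le> ln ((\<Sum>i\<in>B. exp (- \<eta>' * C i)) / N)"
    using N sum_exp_pos[OF fin ne, of "\<lambda>i. - \<eta> * C i"] by (intro ln_mono) (simp_all add: y_def)
  then have "r * ln ((\<Sum>i\<in>B. y i) / N) \<le> ln ((\<Sum>i\<in>B. exp (- \<eta>' * C i)) / N)"
    using N sum_exp_pos[OF fin ne, of "\<lambda>i. - \<eta> * C i"] by (simp add: y_def ln_powr)
  then show ?thesis
    using assms by (simp add: exp_potential_def y_def N_def r_def field_simps)
qed

lemma exp_potential_le_average:
  assumes fin: "finite B" and ne: "B \<noteq> {}" and "0 < \<eta>"
    and v0: "\<And>i. i \<in> B \<Longrightarrow> 0 \<le> v i" and v1: "sum v B = 1"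
  shows "exp_potential B \<eta> C \<le> (\<Sum>i\<in>B. v i * C i) + ln (card B) / \<eta>"
proof -
  define N where "N = real (card B)"
  have N: "N > 0" using fin ne by (simp add: N_def card_gt_0_iff)
  have le_each: "exp_potential B \<eta> C \<le> C j + ln N / \<eta>" if "j \<in> B" for j
  proof -
    have "exp (- \<eta> * C j) \<le> (\<Sum>i\<in>B. exp (- \<eta> * C i))"
      using fin that by (intro member_le_sum) auto
    then have "ln (exp (- \<eta> * C j) / N) \<le> ln ((\<Sum>i\<in>B. exp (- \<eta> * C i)) / N)"
      using N by (intro ln_mono divide_right_mono) auto
    then have "- \<eta> * C j - ln N \<le> ln ((\<Sum>i\<in>B. exp (- \<eta> * C i)) / N)"
      using N by (simp add: ln_div)
    then show ?thesis
      using assms(3) by (simp add: exp_potential_def N_def field_simps)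
  qed
  have "exp_potential B \<eta> C = (\<Sum>i\<in>B. v i * exp_potential B \<eta> C)"
    using v1 by (simp flip: sum_distrib_right)
  also have "\<dots> \<le> (\<Sum>i\<in>B. v i * (C i + ln N / \<eta>))"
    by (intro sum_mono mult_left_mono le_each v0)
  also have "\<dots> = (\<Sum>i\<in>B. v i * C i) + (\<Sum>i\<in>B. v i) * (ln N / \<eta>)"
    by (simp add: distrib_left sum.distrib sum_distrib_right sum_divide_distrib)
  finally show ?thesis by (simp add: N_def v1)
qed

lemma exp_weights_loss_le_potential_increment:
  assumes fin: "finite B" and ne: "B \<noteq> {}" and \<eta>: "0 < \<eta>"
    and gb: "\<And>i. i \<in> B \<Longrightarrow> \<bar>g i\<bar> \<le> G"
  shows "(\<Sum>i\<in>B. exp_weights B \<eta> C i * g i)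
    \<le> exp_potential B \<eta> (\<lambda>i. C i + g i) - exp_potential B \<eta> C + \<eta> * G\<^sup>2 / 2"
proof -
  define p where "p = exp_weights B \<eta> C"
  define Z where "Z = (\<Sum>j\<in>B. exp (- \<eta> * C j))"
  have Z: "Z > 0" unfolding Z_def by (rule sum_exp_pos[OF fin ne])
  have "(\<Sum>i\<in>B. p i * exp (- \<eta> * g i)) = (\<Sum>i\<in>B. exp (- \<eta> * (C i + g i))) / Z"
    by (simp add: p_def exp_weights_def Z_def sum_divide_distrib algebra_simps flip: exp_add)
  then have increment: "exp_potential B \<eta> (\<lambda>i. C i + g i) - exp_potential B \<eta> C
      = - ln (\<Sum>i\<in>B. p i * exp (- \<eta> * g i)) / \<eta>"
    using Z sum_exp_pos[OF fin ne, of "\<lambda>i. - \<eta> * (C i + g i)"] fin ne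
    by (simp add: exp_potential_def Z_def ln_div diff_divide_distrib card_gt_0_iff)
  have "ln (\<Sum>i\<in>B. p i * exp (- \<eta> * g i)) \<le> - \<eta> * (\<Sum>i\<in>B. p i * g i) + \<eta>\<^sup>2 * G\<^sup>2 / 2"
    using \<eta> by (intro ln_sum_exp_le_hoeffding[OF fin _ _ gb])
      (auto simp: p_def exp_weights_nonneg sum_exp_weights[OF fin ne])
  then have "- (- \<eta> * (\<Sum>i\<in>B. p i * g i) + \<eta>\<^sup>2 * G\<^sup>2 / 2) / \<eta>
      \<le> - ln (\<Sum>i\<in>B. p i * exp (- \<eta> * g i)) / \<eta>"
    using \<eta> by (intro divide_right_mono) auto
  moreover have "- (- \<eta> * (\<Sum>i\<in>B. p i * g i) + \<eta>\<^sup>2 * G\<^sup>2 / 2) / \<eta>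
      = (\<Sum>i\<in>B. p i * g i) - \<eta> * G\<^sup>2 / 2"
    using \<eta> by (simp add: field_simps power2_eq_square)
  ultimately show ?thesis
    unfolding increment by (simp add: p_def)
qed

lemma exp_weights_regret_antimono_rates:
  fixes g :: "nat \<Rightarrow> 'a \<Rightarrow> real" and e b :: "nat \<Rightarrow> real"
  assumes fin: "finite B" and ne: "B \<noteq> {}"
    and e_pos: "\<And>t. 0 < e t" and e_antimono: "\<And>t. e (Suc t) \<le> e t"
    and gb: "\<And>t i. t \<in> {1..T} \<Longrightarrow> i \<in> B \<Longrightarrow> \<bar>g t i\<bar> \<le> b t"
    and v0: "\<And>i. i \<in> B \<Longrightarrow> 0 \<le> v i" and v1: "sum v B = 1"
  shows "(\<Sum>t=1..T. \<Sum>i\<in>B. g t i * (exp_weights B (e (t - 1)) (\<lambda>i. \<Sum>s=1..t-1. g s i) i - v i))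
    \<le> ln (card B) / e T + (\<Sum>t=1..T. e (t - 1) * (b t)\<^sup>2 / 2)"
proof -
  define C where "C t = (\<lambda>i. \<Sum>s=1..t. g s i)" for t
  define loss where "loss t = (\<Sum>i\<in>B. exp_weights B (e (t - 1)) (C (t - 1)) i * g t i)" for t
  have "(\<Sum>t=1..T'. loss t) \<le> exp_potential B (e T') (C T') + (\<Sum>t=1..T'. e (t - 1) * (b t)\<^sup>2 / 2)"
    if "T' \<le> T" for T'
    using that
  proof (induction T')
    case 0
    then show ?case using fin ne by (simp add: C_def)
  next
    case (Suc T')
    have "loss (Suc T') \<le> exp_potential B (e T') (C (Suc T')) - exp_potential B (e T') (C T')
        + e T' * (b (Suc T'))\<^sup>2 / 2"
      unfolding loss_def C_def using Suc.prems
      by (simp add: exp_weights_loss_le_potential_increment fin ne e_pos gb)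
    moreover have "exp_potential B (e T') (C (Suc T')) \<le> exp_potential B (e (Suc T')) (C (Suc T'))"
      by (rule exp_potential_antimono[OF fin ne e_pos e_antimono])
    ultimately show ?case
      using Suc by simp
  qed
  then have "(\<Sum>t=1..T. loss t) \<le> exp_potential B (e T) (C T) + (\<Sum>t=1..T. e (t - 1) * (b t)\<^sup>2 / 2)"
    by simp
  moreover have "exp_potential B (e T) (C T) \<le> (\<Sum>i\<in>B. v i * C T i) + ln (card B) / e T"
    by (rule exp_potential_le_average[OF fin ne e_pos v0 v1])
  moreover have "(\<Sum>t=1..T. \<Sum>i\<in>B. v i * g t i) = (\<Sum>i\<in>B. v i * C T i)"
    by (subst sum.swap) (simp add: C_def sum_distrib_left)
  ultimately show ?thesis
    by (simp add: loss_def C_def algebra_simps sum_subtractf)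
qed

lemma inverse_sqrt_le_diff_sqrt:
  fixes x :: real
  assumes "0 \<le> x"
  shows "1 / sqrt (x + 1) \<le> 2 * (sqrt (x + 1) - sqrt x)"
proof -
  define a b where "a = sqrt x" and "b = sqrt (x + 1)"
  have "0 \<le> a" "0 < b" "a \<le> b" using assms by (auto simp: a_def b_def)
  have "(b - a) * (b + a) = 1" using assms by (simp add: a_def b_def algebra_simps)
  then have "b - a = 1 / (b + a)" using \<open>0 \<le> a\<close> \<open>0 < b\<close> by (simp add: field_simps)
  also have "\<dots> \<ge> 1 / (2 * b)" using \<open>0 \<le> a\<close> \<open>0 < b\<close> \<open>a \<le> b\<close> by (intro divide_left_mono) auto
  finally show ?thesis using \<open>0 < b\<close> by (simp add: a_def b_def field_simps)
qed

lemma filter_atLeastAtMost_Suc: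
  "{t\<in>{1..Suc T}. P t} = (if P (Suc T) then insert (Suc T) {t\<in>{1..T}. P t} else {t\<in>{1..T}. P t})"
  by (auto simp: le_Suc_eq)

lemma sum_inverse_sqrt_count_le:
  fixes act :: "nat \<Rightarrow> bool"
  assumes "card {t\<in>{1..T}. act t} \<noteq> 0"
  shows "(\<Sum>t\<in>{t\<in>{1..T}. act t}. 1 / sqrt (1 + real (card {s\<in>{1..t-1}. act s})))
    \<le> 2 * sqrt (card {t\<in>{1..T}. act t}) - 1"
  using assms
proof (induction T)
  case 0
  then show ?case by simp
next
  case (Suc T)
  define c where "c = card {t\<in>{1..T}. act t}"
  show ?case
  proof (cases "act (Suc T)")
    case False
    then show ?thesis using Suc unfolding filter_atLeastAtMost_Suc[of T act] by simp
  next
    case True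
    define S where "S = (\<Sum>t\<in>{t\<in>{1..T}. act t}. 1 / sqrt (1 + real (card {s\<in>{1..t-1}. act s})))"
    have "S + 1 / sqrt (real c + 1) \<le> 2 * sqrt (real c + 1) - 1"
    proof (cases "c = 0")
      case True
      then have "{t\<in>{1..T}. act t} = {}" by (simp add: c_def)
      then show ?thesis using True unfolding S_def by (simp only:) simp
    next
      case False
      then have "S \<le> 2 * sqrt c - 1" using Suc.IH by (simp add: S_def c_def)
      moreover have "1 / sqrt (real c + 1) \<le> 2 * (sqrt (real c + 1) - sqrt c)"
        by (rule inverse_sqrt_le_diff_sqrt) simp
      ultimately show ?thesis by simp
    qed
    then show ?thesis
      using True unfolding filter_atLeastAtMost_Suc[of T act] by (simp add: S_def c_def add.commute)
  qed
qed

lemma sqrt_one_plus_le: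
  fixes x :: real
  assumes "1 \<le> x"
  shows "sqrt (1 + x) \<le> sqrt x + 1 / 2"
proof (rule real_le_lsqrt)
  have "(sqrt x + 1 / 2)\<^sup>2 = x + sqrt x + 1 / 4"
    using assms by (simp add: power2_eq_square algebra_simps)
  moreover have "1 \<le> sqrt x" using assms by simp
  ultimately show "1 + x \<le> (sqrt x + 1 / 2)\<^sup>2" by linarith
qed (use assms in simp)

lemma adaptive_rates_tradeoff:
  fixes act :: "nat \<Rightarrow> bool" and e :: "nat \<Rightarrow> real"
  assumes G: "0 < G" and l: "0 < l" and n: "1 \<le> card {t\<in>{1..T}. act t}"
    and e: "\<And>t. e t = 1 / G * sqrt (l / (1 + real (card {s\<in>{1..t}. act s})))"
  shows "l / e T + (\<Sum>t=1..T. e (t - 1) * (if act t then G else 0)\<^sup>2 / 2)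
    \<le> 2 * (G * sqrt (real (card {t\<in>{1..T}. act t}) * l))"
proof -
  define n where "n = card {t\<in>{1..T}. act t}"
  define c where "c t = card {s\<in>{1..t}. act s}" for t
  have e_eq: "e t = sqrt l / (G * sqrt (1 + real (c t)))" for t
    by (simp add: e c_def real_sqrt_divide)
  have "l / e T = G * sqrt l * sqrt (1 + real n)"
  proof -
    have "l = sqrt l * sqrt l" using l by simp
    then show ?thesis using l G by (simp add: e_eq c_def n_def field_simps)
  qed
  moreover have "(\<Sum>t=1..T. e (t - 1) * (if act t then G else 0)\<^sup>2 / 2)
      = (\<Sum>t\<in>{t\<in>{1..T}. act t}. e (t - 1) * G\<^sup>2 / 2)"
    by (subst sum.inter_filter) (auto intro: sum.cong)
  moreover have "\<dots> = G * sqrt l / 2 * (\<Sum>t\<in>{t\<in>{1..T}. act t}. 1 / sqrt (1 + real (c (t - 1))))"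
    using G unfolding sum_distrib_left
    by (intro sum.cong) (simp_all add: e_eq field_simps power2_eq_square)
  moreover have "\<dots> \<le> G * sqrt l / 2 * (2 * sqrt n - 1)"
  proof (rule mult_left_mono)
    show "(\<Sum>t\<in>{t\<in>{1..T}. act t}. 1 / sqrt (1 + real (c (t - 1)))) \<le> 2 * sqrt n - 1"
      using n unfolding c_def n_def by (intro sum_inverse_sqrt_count_le) linarith
  qed (use G l in simp)
  moreover have "G * sqrt l * sqrt (1 + real n) + G * sqrt l / 2 * (2 * sqrt n - 1)
      \<le> G * sqrt l * (2 * sqrt n)"
  proof -
    have "sqrt (1 + real n) + sqrt n - 1 / 2 \<le> 2 * sqrt n"
      using sqrt_one_plus_le[of n] n by (simp add: n_def)
    then have "G * sqrt l * (sqrt (1 + real n) + sqrt n - 1 / 2) \<le> G * sqrt l * (2 * sqrt n)"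
      using G l by (intro mult_left_mono) auto
    then show ?thesis
      by (simp add: algebra_simps)
  qed
  ultimately show ?thesis
    by (simp add: n_def real_sqrt_mult mult_ac)
qed

lemma adaptive_exp_weights_regret:
  fixes g :: "nat \<Rightarrow> 'a \<Rightarrow> real" and act :: "nat \<Rightarrow> bool" and e :: "nat \<Rightarrow> real"
  assumes fin: "finite B" and ne: "B \<noteq> {}" and G: "0 < G"
    and gb: "\<And>t i. t \<in> {1..T} \<Longrightarrow> i \<in> B \<Longrightarrow> \<bar>g t i\<bar> \<le> (if act t then G else 0)"
    and v0: "\<And>i. i \<in> B \<Longrightarrow> 0 \<le> v i" and v1: "sum v B = 1"
    and e: "\<And>t. e t = 1 / G * sqrt (ln (card B) / (1 + real (card {s\<in>{1..t}. act s})))"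
  shows "(\<Sum>t=1..T. \<Sum>i\<in>B. g t i * (exp_weights B (e (t - 1)) (\<lambda>i. \<Sum>s=1..t-1. g s i) i - v i))
    \<le> 2 * (G * sqrt (real (card {t\<in>{1..T}. act t}) * ln (card B)))"
    (is "?regret \<le> ?bound")
proof -
  define n where "n = card {t\<in>{1..T}. act t}"
  have bound_nonneg: "0 \<le> ?bound"
    using G fin ne by (simp add: Suc_le_eq card_gt_0_iff)
  consider (single) "card B = 1" | (idle) "n = 0" | (main) "2 \<le> card B" "1 \<le> n"
  proof -
    have "card B \<noteq> 0" using fin ne by simp
    then show ?thesis using that by (cases "card B = 1"; cases "n = 0") auto
  qed
  then show ?thesis
  proof cases
    case single
    then obtain b where "B = {b}" by (auto simp: card_Suc_eq)
    then have "?regret = 0" using v1 by simp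
    then show ?thesis using bound_nonneg by simp
  next
    case idle
    then have "\<not> act t" if "t \<in> {1..T}" for t
      using that by (simp add: n_def)
    then have "?regret = 0" using gb by (simp add: sum.neutral)
    then show ?thesis using bound_nonneg by simp
  next
    case main
    then have lnN: "0 < ln (card B)" by simp
    have e_pos: "0 < e t" for t using lnN G by (simp add: e)
    have "card {s\<in>{1..t}. act s} \<le> card {s\<in>{1..Suc t}. act s}" for t
      by (intro card_mono) auto
    then have e_antimono: "e (Suc t) \<le> e t" for t
      using lnN G unfolding e by (intro mult_left_mono real_sqrt_le_mono divide_left_mono) auto
    have "?regret \<le> ln (card B) / e T + (\<Sum>t=1..T. e (t - 1) * (if act t then G else 0)\<^sup>2 / 2)"
      using gb by (intro exp_weights_regret_antimono_rates) (simp_all add: fin ne e_pos e_antimono v0 v1)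
    also have "\<dots> \<le> ?bound"
      using main(2) by (intro adaptive_rates_tradeoff[OF G lnN _ e]) (simp add: n_def)
    finally show ?thesis .
  qed
qed

lemma convex_on_has_derivative_le:
  fixes f :: "'a::real_normed_vector \<Rightarrow> real"
  assumes cvx: "convex_on S f" and u: "u \<in> S" and v: "v \<in> S"
    and D: "(f has_derivative D) (at u)"
  shows "D (v - u) \<le> f v - f u"
proof -
  define h where "h s = f (u + s *\<^sub>R (v - u))" for s :: real
  have "((\<lambda>s::real. u + s *\<^sub>R (v - u)) has_derivative (\<lambda>s. s *\<^sub>R (v - u))) (at 0)"
    by (auto intro!: derivative_eq_intros)
  moreover have "(f has_derivative D) (at (u + 0 *\<^sub>R (v - u)))"
    using D by simp
  ultimately have "(h has_derivative (\<lambda>s. D (s *\<^sub>R (v - u)))) (at 0)"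
    unfolding h_def by (rule diff_chain_at[unfolded o_def])
  moreover have "(\<lambda>s. D (s *\<^sub>R (v - u))) = (*) (D (v - u))"
    using has_derivative_linear[OF D] by (simp add: linear_cmul fun_eq_iff)
  ultimately have "(h has_field_derivative D (v - u)) (at 0)"
    by (simp add: has_field_derivative_def)
  then have "((\<lambda>s. (h s - h 0) / (s - 0)) \<longlongrightarrow> D (v - u)) (at_right 0)"
    unfolding has_field_derivative_iff using filterlim_at_split by blast
  moreover have "eventually (\<lambda>s. (h s - h 0) / (s - 0) \<le> f v - f u) (at_right 0)"
    using eventually_at_right_real[OF zero_less_one]
  proof eventually_elim
    case (elim s)
    then have "h s - h 0 \<le> s * (f v - f u)"
      using convex_onD[OF cvx, of s u v] u v by (simp add: h_def algebra_simps)
    then show ?case using elim by (simp add: divide_simps mult.commute)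
  qed
  ultimately show ?thesis
    by (rule tendsto_upperbound) simp
qed

lemma frechet_derivative_eq_sum_partial:
  fixes f :: "real^'n::finite \<Rightarrow> real"
  assumes "f differentiable at u"
  shows "frechet_derivative f (at u) y = (\<Sum>i\<in>UNIV. partial f u i * y $ i)"
proof -
  have lin: "linear (frechet_derivative f (at u))"
    using assms by (intro has_derivative_linear) (simp add: frechet_derivative_works)
  have y: "y = (\<Sum>i\<in>UNIV. y $ i *\<^sub>R axis i 1)"
    using basis_expansion[of y] by (simp add: scalar_mult_eq_scaleR)
  have "frechet_derivative f (at u) y = (\<Sum>i\<in>UNIV. y $ i * frechet_derivative f (at u) (axis i 1))"
    by (subst y) (simp add: linear_sum[OF lin] linear_cmul[OF lin])
  then show ?thesis
    by (simp add: partial_def mult.commute)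
qed

lemma convex_on_le_sum_partial:
  fixes f :: "real^'n::finite \<Rightarrow> real"
  assumes "convex_on S f" and "u \<in> S" and "v \<in> S" and "f differentiable at u"
  shows "f u - f v \<le> (\<Sum>i\<in>UNIV. partial f u i * (u $ i - v $ i))"
proof -
  have "(f has_derivative frechet_derivative f (at u)) (at u)"
    using assms(4) frechet_derivative_works by blast
  then have "frechet_derivative f (at u) (v - u) \<le> f v - f u"
    by (rule convex_on_has_derivative_le[OF assms(1-3)])
  then show ?thesis
    using assms(4) by (simp add: frechet_derivative_eq_sum_partial algebra_simps sum_subtractf)
qed

lemma weights_in_prod_simplex:
  assumes "{..<K} \<subseteq> range blk"
  shows "weights K blk L G t c \<in> prod_simplex K blk"
proof -
  let ?w = "weights K blk L G t c"
  have "(\<Sum>i\<in>{i. blk i = k}. ?w $ i) = 1" if "k < K" for k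
  proof -
    define Z where "Z = (\<Sum>j\<in>{j. blk j = k}. exp (- eta K blk L G k t * c $ j))"
    have "{i. blk i = k} \<noteq> {}" using assms that by auto
    then have "Z > 0" unfolding Z_def by (intro sum_pos) auto
    have "(\<Sum>i\<in>{i. blk i = k}. ?w $ i) = (\<Sum>i\<in>{i. blk i = k}. exp (- eta K blk L G k t * c $ i) / Z)"
      by (rule sum.cong) (auto simp: weights_def Z_def)
    also have "\<dots> = 1"
      using \<open>Z > 0\<close> by (simp add: Z_def flip: sum_divide_distrib)
    finally show ?thesis .
  qed
  moreover have "0 \<le> ?w $ i" for i
    by (simp add: weights_def sum_nonneg)
  ultimately show ?thesis
    by (simp add: prod_simplex_def)
qed

lemma cumgrad_eq_sum: "cumgrad K blk L G t = (\<Sum>s=1..t. grad (L s) (ameg K blk L G s))"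
  by (induction t) (simp_all add: ameg_def)

lemma ameg_eq_exp_weights:
  "ameg K blk L G t $ i = exp_weights {j. blk j = blk i} (eta K blk L G (blk i) (t - 1))
     (\<lambda>j. \<Sum>s=1..t-1. partial (L s) (ameg K blk L G s) j) i"
  unfolding ameg_def[of K blk L G t]
  by (simp add: weights_def exp_weights_def cumgrad_eq_sum grad_def sum_component)

lemma ameg_in_prod_simplex:
  "{..<K} \<subseteq> range blk \<Longrightarrow> ameg K blk L G t \<in> prod_simplex K blk"
  unfolding ameg_def by (rule weights_in_prod_simplex)

lemma ameg_block_regret_le:
  fixes blk :: "'n::finite \<Rightarrow> nat" and L :: "nat \<Rightarrow> real^'n \<Rightarrow> real"
  assumes blocks: "{..<K} \<subseteq> range blk" and k: "k < K" and G: "0 < G k"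
    and bnd: "\<And>t u i. t \<in> {1..T} \<Longrightarrow> u \<in> prod_simplex K blk \<Longrightarrow> \<bar>partial (L t) u i\<bar> \<le> G (blk i)"
    and v: "v \<in> prod_simplex K blk"
  shows "(\<Sum>t=1..T. \<Sum>i\<in>{i. blk i = k}.
      partial (L t) (ameg K blk L G t) i * (ameg K blk L G t $ i - v $ i))
    \<le> 2 * (G k * sqrt (real (card {t\<in>{1..T}. active K blk L k t}) * ln (real (blocksize blk k))))"
proof -
  define B where "B = {i. blk i = k}"
  define g where "g t i = partial (L t) (ameg K blk L G t) i" for t i
  have "(\<Sum>t=1..T. \<Sum>i\<in>B. g t i * (ameg K blk L G t $ i - v $ i))
      = (\<Sum>t=1..T. \<Sum>i\<in>B. g t i * (exp_weights B (eta K blk L G k (t - 1)) (\<lambda>j. \<Sum>s=1..t-1. g s j) i - v $ i))"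
    by (intro sum.cong refl) (simp add: B_def g_def ameg_eq_exp_weights)
  also have "\<dots> \<le> 2 * (G k * sqrt (real (card {t\<in>{1..T}. active K blk L k t}) * ln (real (card B))))"
  proof (rule adaptive_exp_weights_regret)
    show "B \<noteq> {}" using blocks k by (auto simp: B_def)
    show "\<bar>g t i\<bar> \<le> (if active K blk L k t then G k else 0)" if "t \<in> {1..T}" "i \<in> B" for t i
      using that bnd ameg_in_prod_simplex[OF blocks] by (force simp: g_def B_def active_def)
    show "eta K blk L G k t = 1 / G k * sqrt (ln (card B) / (1 + real (card {s\<in>{1..t}. active K blk L k s})))" for t
      by (simp add: eta_def blocksize_def B_def)
  qed (use v k G in \<open>auto simp: B_def prod_simplex_def\<close>)
  finally show ?thesis
    by (simp add: g_def blocksize_def B_def)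
qed

theorem theorem9:
  fixes K T :: nat and blk :: "'n::finite \<Rightarrow> nat"
    and L :: "nat \<Rightarrow> real^'n \<Rightarrow> real" and G :: "nat \<Rightarrow> real"
  assumes "K \<ge> 1" and "T \<ge> 1"
    and "blk ` UNIV = {..<K}"
    and "\<And>t. t \<ge> 1 \<Longrightarrow> \<exists>S. open S \<and> prod_simplex K blk \<subseteq> S \<and> (\<forall>u\<in>S. L t differentiable at u)"
    and "\<And>t. t \<ge> 1 \<Longrightarrow> convex_on (prod_simplex K blk) (L t)"
    and "\<And>k. k < K \<Longrightarrow> G k > 0"
    and "\<And>t u i. t \<in> {1..T} \<Longrightarrow> u \<in> prod_simplex K blk \<Longrightarrow> \<bar>partial (L t) u i\<bar> \<le> G (blk i)"
  shows "\<forall>v\<in>prod_simplex K blk.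
     (\<Sum>t=1..T. L t (ameg K blk L G t)) - (\<Sum>t=1..T. L t v)
       \<le> 2 * (\<Sum>k<K. G k * sqrt (real (card {t\<in>{1..T}. active K blk L k t}) * ln (real (blocksize blk k))))"
proof
  fix v assume v: "v \<in> prod_simplex K blk"
  define u where "u t = ameg K blk L G t" for t
  define linloss where "linloss t i = partial (L t) (u t) i * (u t $ i - v $ i)" for t i
  have blocks: "{..<K} \<subseteq> range blk" using assms(3) by simp
  have u_in: "u t \<in> prod_simplex K blk" for t
    unfolding u_def by (rule ameg_in_prod_simplex[OF blocks])
  have "L t (u t) - L t v \<le> (\<Sum>i\<in>UNIV. linloss t i)" if "t \<in> {1..T}" for t
  proof -
    have t: "1 \<le> t" using that by simp
    then have "L t differentiable at (u t)" using assms(4) u_in by blast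
    then show ?thesis
      unfolding linloss_def by (rule convex_on_le_sum_partial[OF assms(5)[OF t] u_in v])
  qed
  then have "(\<Sum>t=1..T. L t (u t)) - (\<Sum>t=1..T. L t v) \<le> (\<Sum>t=1..T. \<Sum>i\<in>UNIV. linloss t i)"
    unfolding sum_subtractf[symmetric] by (rule sum_mono)
  also have "\<dots> = (\<Sum>k<K. \<Sum>t=1..T. \<Sum>i\<in>{i. blk i = k}. linloss t i)"
  proof -
    have by_blocks: "(\<Sum>i\<in>UNIV. F i) = (\<Sum>k<K. \<Sum>i\<in>{i. blk i = k}. F i)" for F :: "'n \<Rightarrow> real"
      using sum.group[of UNIV "{..<K}" blk F] assms(3) by simp
    show ?thesis by (subst by_blocks) (rule sum.swap)
  qed
  also have "\<dots> \<le> (\<Sum>k<K. 2 * (G k * sqrt (real (card {t\<in>{1..T}. active K blk L k t}) * ln (real (blocksize blk k)))))"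
    unfolding linloss_def u_def using assms(6,7) v
    by (intro sum_mono ameg_block_regret_le[OF blocks]) auto
  finally show "(\<Sum>t=1..T. L t (ameg K blk L G t)) - (\<Sum>t=1..T. L t v)
       \<le> 2 * (\<Sum>k<K. G k * sqrt (real (card {t\<in>{1..T}. active K blk L k t}) * ln (real (blocksize blk k))))"
    by (simp add: u_def sum_distrib_left)
qed

end
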